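(* For any digraph $G$ and any field $\mathbb F$, $\rho(G)=h_1^{\rm twist}(\underline{\mathbb F})$, where $\underline{\mathbb F}$ is the structure sheaf of $G$.
   Context: A digraph $G$ has finite vertex set $V_G$, edge set $E_G$, and tail/head maps $t_G,h_G\colon E_G\to V_G$ (multiple edges and loops allowed). The structure sheaf $\underline{\mathbb F}$ assigns $\mathbb F$ to every vertex and edge, with all restriction maps the identity. For a sheaf $\mathcal F$ (values $\mathcal F(P)$, restriction maps $\mathcal F(t,e)\colon\mathcal F(e)\to\mathcal F(t_Ge)$, $\mathcal F(h,e)\colon\mathcal F(e)\to\mathcal F(h_Ge)$), let $\psi(e)$, $e\in E_G$, be independent indeterminates and $\mathcal F^\psi$ the sheaf of $\mathbb F(\psi)$-spaces with values $\mathcal F(P)\otimes\mathbb F(\psi)$, head maps $\mathcal F(h,e)$, tail maps $\psi(e)\mathcal F(t,e)$; $h_1^{\rm twist}(\mathcal F)$ is the $\mathbb F(\psi)$-dimension of the kernel of $d=d_h-d_t\colon\bigoplus_e\mathcal F^\psi(e)\to\bigoplus_v\mathcal F^\psi(v)$, where $d_h$ (resp. $d_t$) sends the summand of $e$ to that of $h_Ge$ (resp. $t_Ge$) via the head (resp. tail) map. Regarding $G$ as undirected, for a connected component $X$ let $h_1(X)=|E_X|-|V_X|+1$, and $\rho(G)=\sum_X\max(0,h_1(X)-1)$ over connected components. *)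

theory Defs
  imports "Graph_Theory.Graph_Theory" "HOL-Library.Poly_Mapping" "HOL-Library.Function_Algebras"
    "HOL-Computational_Algebra.Fraction_Field"
begin

text \<open>The rational function field F(psi) in independent indeterminates psi(e), one per
  arc e: the fraction field of the polynomial ring F[psi(e) : e], where polynomials are
  finitely supported maps from monomials (finitely supported exponent vectors) to F.
  The linear order on the arc type is only a technical device required by the library
  to provide the integral-domain instance.\<close>

type_synonym ('e, 'k) ratfun = "(('e \<Rightarrow>\<^sub>0 nat) \<Rightarrow>\<^sub>0 'k) fract"

definition psi :: "'e \<Rightarrow> ('e::linorder, 'k::field) ratfun" where
  "psi e = Fract (Poly_Mapping.single (Poly_Mapping.single e 1) 1) 1"

text \<open>Twisted structure sheaf: head maps identity, tail maps multiplication by psi(e).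
  1-cochains are families (x_e) for e in arcs G, represented by functions vanishing
  outside arcs G; d = d_h - d_t lands in the 0-cochains indexed by vertices.\<close>

definition d_head :: "('v,'e) pre_digraph \<Rightarrow> ('e \<Rightarrow> ('e::linorder,'k::field) ratfun) \<Rightarrow> 'v \<Rightarrow> ('e,'k) ratfun" where
  "d_head G x v = (\<Sum>e\<in>{e\<in>arcs G. head G e = v}. x e)"

definition d_tail :: "('v,'e) pre_digraph \<Rightarrow> ('e \<Rightarrow> ('e::linorder,'k::field) ratfun) \<Rightarrow> 'v \<Rightarrow> ('e,'k) ratfun" where
  "d_tail G x v = (\<Sum>e\<in>{e\<in>arcs G. tail G e = v}. psi e * x e)"

definition twisted_d :: "('v,'e) pre_digraph \<Rightarrow> ('e \<Rightarrow> ('e::linorder,'k::field) ratfun) \<Rightarrow> 'v \<Rightarrow> ('e,'k) ratfun" where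
  "twisted_d G x v = d_head G x v - d_tail G x v"

definition twisted_kernel :: "'k::field itself \<Rightarrow> ('v,'e::linorder) pre_digraph \<Rightarrow> ('e \<Rightarrow> ('e,'k) ratfun) set" where
  "twisted_kernel _ G = {x. (\<forall>e. e \<notin> arcs G \<longrightarrow> x e = 0) \<and> (\<forall>v\<in>verts G. twisted_d G x v = 0)}"

definition h1_twist_struct :: "'k::field itself \<Rightarrow> ('v,'e::linorder) pre_digraph \<Rightarrow> nat" where
  "h1_twist_struct K G =
     vector_space.dim (\<lambda>(c::('e,'k) ratfun) x e. c * x e) (twisted_kernel K G)"

definition components :: "('v,'e) pre_digraph \<Rightarrow> 'v set set" where
  "components G = pre_digraph.sccs_verts (with_proj (mk_symmetric G))"

definition h1_comp :: "('v,'e) pre_digraph \<Rightarrow> 'v set \<Rightarrow> int" where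
  "h1_comp G C = int (card {e\<in>arcs G. tail G e \<in> C}) - int (card C) + 1"

definition rho :: "('v,'e) pre_digraph \<Rightarrow> int" where
  "rho G = (\<Sum>C\<in>components G. max 0 (h1_comp G C - 1))"

end

theory Submission
  imports Defs
begin

(* Add the arcs one at a time. The kernel of d grows by one dimension when the new arc e is added
   exactly if -d(unit e) already lies in the image of d on the old arcs. This is decided component
   by component, with excess = #arcs - #vertices of a component. If the excess is nonnegative, the
   component carries a cycle whose twisted monodromy is a nontrivial monomial, and the image of d
   contains every vertex cochain supported on it. If the excess is -1, the component is a tree and
   the image of d on it is the kernel of a twisted potential whose values are Laurent monomials in
   the psi of its own arcs; such a potential cannot vanish on d(unit e) for a new arc e. Hence the
   dimension grows exactly when both ends of e lie in components of nonnegative excess, which is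
   exactly when sum over components of max(0, excess) = rho grows. *)

section \<open>Laurent monomials\<close>

definition laurent :: "('e \<Rightarrow>\<^sub>0 nat) \<Rightarrow> ('e \<Rightarrow>\<^sub>0 nat) \<Rightarrow> ('e::linorder, 'k::field) ratfun" where
  "laurent a b = Fract (Poly_Mapping.single a 1) (Poly_Mapping.single b 1)"

definition laurent_monomial :: "'e set \<Rightarrow> ('e::linorder, 'k::field) ratfun \<Rightarrow> bool" where
  "laurent_monomial S r \<longleftrightarrow> (\<exists>a b. Poly_Mapping.keys a \<subseteq> S \<and> Poly_Mapping.keys b \<subseteq> S \<and> r = laurent a b)"

lemma single_one_nonzero: "Poly_Mapping.single a (1::'k::field) \<noteq> 0"
  by (metis lookup_single_eq lookup_zero zero_neq_one)

lemma single_one_eq_iff: "Poly_Mapping.single a (1::'k::field) = Poly_Mapping.single b 1 \<longleftrightarrow> a = b"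
  by (metis lookup_single_eq lookup_single_not_eq zero_neq_one)

lemma laurent_nonzero: "laurent a b \<noteq> (0 :: ('e::linorder,'k::field) ratfun)"
  unfolding laurent_def Zero_fract_def by (simp add: eq_fract single_one_nonzero)

lemma laurent_mult: "laurent a b * laurent c d = (laurent (a + c) (b + d) :: ('e::linorder,'k::field) ratfun)"
  unfolding laurent_def by (simp add: mult_single)

lemma laurent_divide: "laurent a b / laurent c d = (laurent (a + d) (b + c) :: ('e::linorder,'k::field) ratfun)"
  unfolding laurent_def by (simp add: mult_single)

lemma laurent_eq_iff: "(laurent a b :: ('e::linorder,'k::field) ratfun) = laurent c d \<longleftrightarrow> a + d = c + b"
  unfolding laurent_def by (simp add: eq_fract single_one_nonzero mult_single single_one_eq_iff)

lemma laurent_zero_zero: "laurent 0 0 = (1 :: ('e::linorder,'k::field) ratfun)"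
  unfolding laurent_def by (simp add: One_fract_def)

lemma psi_eq_laurent: "psi e = (laurent (Poly_Mapping.single e 1) 0 :: ('e::linorder,'k::field) ratfun)"
  unfolding laurent_def psi_def by simp

lemma laurent_monomial_nonzero: "laurent_monomial S r \<Longrightarrow> r \<noteq> 0"
  unfolding laurent_monomial_def by (auto simp: laurent_nonzero)

lemma laurent_monomial_one: "laurent_monomial S (1 :: ('e::linorder,'k::field) ratfun)"
  unfolding laurent_monomial_def by (metis empty_subsetI keys_zero laurent_zero_zero)

lemma laurent_monomial_psi: "laurent_monomial {e} (psi e :: ('e::linorder,'k::field) ratfun)"
  unfolding laurent_monomial_def psi_eq_laurent
  by (rule exI[of _ "Poly_Mapping.single e 1"], rule exI[of _ 0]) simp

lemma laurent_monomial_mono: "laurent_monomial S r \<Longrightarrow> S \<subseteq> T \<Longrightarrow> laurent_monomial T r"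
  unfolding laurent_monomial_def by blast

lemma laurent_monomial_mult:
  assumes "laurent_monomial S r" "laurent_monomial S s"
  shows "laurent_monomial S (r * s :: ('e::linorder,'k::field) ratfun)"
proof -
  obtain a b c d where "Poly_Mapping.keys a \<subseteq> S" "Poly_Mapping.keys b \<subseteq> S" "r = laurent a b"
    "Poly_Mapping.keys c \<subseteq> S" "Poly_Mapping.keys d \<subseteq> S" "s = laurent c d"
    using assms unfolding laurent_monomial_def by blast
  moreover have "Poly_Mapping.keys (a + c) \<subseteq> S" "Poly_Mapping.keys (b + d) \<subseteq> S"
    using calculation keys_add[of a c] keys_add[of b d] by blast+
  ultimately show ?thesis
    unfolding laurent_monomial_def by (auto simp: laurent_mult)
qed

lemma laurent_monomial_divide:
  assumes "laurent_monomial S r" "laurent_monomial S s"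
  shows "laurent_monomial S (r / s :: ('e::linorder,'k::field) ratfun)"
proof -
  obtain a b c d where "Poly_Mapping.keys a \<subseteq> S" "Poly_Mapping.keys b \<subseteq> S" "r = laurent a b"
    "Poly_Mapping.keys c \<subseteq> S" "Poly_Mapping.keys d \<subseteq> S" "s = laurent c d"
    using assms unfolding laurent_monomial_def by blast
  moreover have "Poly_Mapping.keys (a + d) \<subseteq> S" "Poly_Mapping.keys (b + c) \<subseteq> S"
    using calculation keys_add[of a d] keys_add[of b c] by blast+
  ultimately show ?thesis
    unfolding laurent_monomial_def by (auto simp: laurent_divide)
qed

text \<open>This is the only place where the independence of the indeterminates is used.\<close>

lemma laurent_monomial_ne_psi_mult:
  assumes "laurent_monomial S r" "laurent_monomial S s" "e \<notin> S"
  shows "r \<noteq> psi e * (s :: ('e::linorder,'k::field) ratfun)"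
proof
  obtain a b c d where ab: "Poly_Mapping.keys a \<subseteq> S" "Poly_Mapping.keys b \<subseteq> S" "r = laurent a b"
    and cd: "Poly_Mapping.keys c \<subseteq> S" "Poly_Mapping.keys d \<subseteq> S" "s = laurent c d"
    using assms(1,2) unfolding laurent_monomial_def by blast
  assume "r = psi e * s"
  then have "a + d = Poly_Mapping.single e 1 + c + b"
    by (simp add: ab(3) cd(3) psi_eq_laurent laurent_mult laurent_eq_iff)
  then have "Poly_Mapping.lookup (a + d) e = Poly_Mapping.lookup (Poly_Mapping.single e 1 + c + b) e"
    by simp
  moreover have "Poly_Mapping.lookup a e = 0" "Poly_Mapping.lookup d e = 0"
    using ab cd assms(3) by (auto simp: in_keys_iff)
  ultimately show False by (simp add: lookup_add)
qed

section \<open>The twisted coboundary, its image and its kernel\<close>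

definition supported :: "'a set \<Rightarrow> ('a \<Rightarrow> 'r::zero) \<Rightarrow> bool" where
  "supported S x \<longleftrightarrow> (\<forall>a. a \<notin> S \<longrightarrow> x a = 0)"

definition unit_cochain :: "'e \<Rightarrow> 'e \<Rightarrow> 'r::zero_neq_one" where
  "unit_cochain e = (\<lambda>e'. if e' = e then 1 else 0)"

interpretation cochains: vector_space "\<lambda>(c::('e::linorder,'k::field) ratfun) (x::'e \<Rightarrow> ('e,'k) ratfun) e. c * x e"
  by unfold_locales (auto simp: fun_eq_iff algebra_simps)

locale twisted_digraph = fin_digraph G for G :: "('v,'e::linorder) pre_digraph"
begin

lemma twisted_d_add: "twisted_d G (\<lambda>e. x e + y e) v = twisted_d G x v + twisted_d G y v"
  unfolding twisted_d_def d_head_def d_tail_def by (simp add: sum.distrib algebra_simps)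

lemma twisted_d_diff: "twisted_d G (\<lambda>e. x e - y e) v = twisted_d G x v - twisted_d G y v"
  unfolding twisted_d_def d_head_def d_tail_def by (simp add: sum_subtractf algebra_simps)

lemma twisted_d_scale: "twisted_d G (\<lambda>e. c * x e) v = c * twisted_d G x v"
  unfolding twisted_d_def d_head_def d_tail_def by (simp add: sum_distrib_left algebra_simps)

lemma twisted_d_zero: "twisted_d G (\<lambda>e. 0) v = 0"
  unfolding twisted_d_def d_head_def d_tail_def by simp

lemma twisted_d_outside: "v \<notin> verts G \<Longrightarrow> twisted_d G x v = 0"
proof -
  assume "v \<notin> verts G"
  then have no_arcs: "{e \<in> arcs G. head G e = v} = {}" "{e \<in> arcs G. tail G e = v} = {}" by auto
  show ?thesis unfolding twisted_d_def d_head_def d_tail_def no_arcs by simp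
qed

lemma twisted_d_unit_cochain:
  assumes "e \<in> arcs G"
  shows "twisted_d G (unit_cochain e) v
    = (if head G e = v then 1 else 0) - psi e * (if tail G e = v then 1 else 0)"
  using assms unfolding twisted_d_def d_head_def d_tail_def unit_cochain_def
  by (simp add: if_distrib[of "\<lambda>x. psi _ * x"] sum.delta[OF finite_Collect_conjI] cong: if_cong)

definition pairing :: "('v \<Rightarrow> ('e,'k::field) ratfun) \<Rightarrow> ('v \<Rightarrow> ('e,'k) ratfun) \<Rightarrow> ('e,'k) ratfun" where
  "pairing \<phi> y = (\<Sum>v\<in>verts G. \<phi> v * y v)"

lemma sum_verts_fibres:
  assumes "\<And>e. e \<in> arcs G \<Longrightarrow> f e \<in> verts G"
  shows "(\<Sum>v\<in>verts G. \<phi> v * (\<Sum>e\<in>{e\<in>arcs G. f e = v}. g e))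
    = (\<Sum>e\<in>arcs G. \<phi> (f e) * g e :: 'r::comm_semiring_1)"
proof -
  have "(\<Sum>v\<in>verts G. \<phi> v * (\<Sum>e\<in>{e\<in>arcs G. f e = v}. g e))
      = (\<Sum>v\<in>verts G. \<Sum>e\<in>{e\<in>arcs G. f e = v}. \<phi> (f e) * g e)"
    by (auto simp: sum_distrib_left intro!: sum.cong)
  also have "\<dots> = (\<Sum>e\<in>arcs G. \<phi> (f e) * g e)"
    by (rule sum.group) (use assms in auto)
  finally show ?thesis .
qed

lemma pairing_twisted_d:
  "pairing \<phi> (twisted_d G x) = (\<Sum>e\<in>arcs G. x e * (\<phi> (head G e) - psi e * \<phi> (tail G e)))"
proof -
  have "pairing \<phi> (twisted_d G x) = (\<Sum>v\<in>verts G. \<phi> v * (\<Sum>e\<in>{e\<in>arcs G. head G e = v}. x e))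
     - (\<Sum>v\<in>verts G. \<phi> v * (\<Sum>e\<in>{e\<in>arcs G. tail G e = v}. psi e * x e))"
    unfolding pairing_def twisted_d_def d_head_def d_tail_def
    by (simp add: right_diff_distrib sum_subtractf)
  also have "\<dots> = (\<Sum>e\<in>arcs G. \<phi> (head G e) * x e) - (\<Sum>e\<in>arcs G. \<phi> (tail G e) * (psi e * x e))"
    by (simp only: sum_verts_fibres head_in_verts tail_in_verts)
  also have "\<dots> = (\<Sum>e\<in>arcs G. x e * (\<phi> (head G e) - psi e * \<phi> (tail G e)))"
    by (simp add: sum_subtractf[symmetric] algebra_simps)
  finally show ?thesis .
qed

lemma pairing_twisted_d_unit_cochain:
  "e \<in> arcs G \<Longrightarrow> pairing \<phi> (twisted_d G (unit_cochain e)) = \<phi> (head G e) - psi e * \<phi> (tail G e)"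
proof -
  assume "e \<in> arcs G"
  have "pairing \<phi> (twisted_d G (unit_cochain e))
      = (\<Sum>e'\<in>arcs G. if e' = e then \<phi> (head G e') - psi e' * \<phi> (tail G e') else 0)"
    unfolding pairing_twisted_d unit_cochain_def by (rule sum.cong) auto
  then show ?thesis using \<open>e \<in> arcs G\<close> by (simp add: sum.delta)
qed

lemma pairing_diff: "pairing \<phi> (\<lambda>v. y v - z v) = pairing \<phi> y - pairing \<phi> z"
  unfolding pairing_def by (simp add: sum_subtractf algebra_simps)

lemma pairing_scale: "pairing \<phi> (\<lambda>v. c * y v) = c * pairing \<phi> y"
  unfolding pairing_def by (simp add: sum_distrib_left algebra_simps)

lemma pairing_uminus: "pairing \<phi> (\<lambda>v. - y v) = - pairing \<phi> y"
  unfolding pairing_def by (simp add: sum_negf)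

lemma pairing_add_scale_left:
  "pairing (\<lambda>v. \<phi> v + c * \<chi> v) y = pairing \<phi> y + c * pairing \<chi> y"
  unfolding pairing_def by (simp add: sum.distrib sum_distrib_left algebra_simps)

lemma pairing_restrict:
  "supported C \<phi> \<Longrightarrow> pairing \<phi> (\<lambda>v. if v \<in> C then y v else 0) = pairing \<phi> y"
  unfolding pairing_def supported_def by (intro sum.cong) auto

definition d_image :: "'e set \<Rightarrow> ('v \<Rightarrow> ('e,'k::field) ratfun) set" where
  "d_image S = {twisted_d G x | x. supported S x}"

lemma zero_in_d_image: "(\<lambda>v. 0) \<in> d_image S"
  unfolding d_image_def supported_def
  by (rule CollectI, rule exI[of _ "\<lambda>e. 0"]) (simp add: twisted_d_zero fun_eq_iff)

lemma d_image_add: "y \<in> d_image S \<Longrightarrow> z \<in> d_image S \<Longrightarrow> (\<lambda>v. y v + z v) \<in> d_image S"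
  unfolding d_image_def supported_def
  by (clarsimp, rule_tac x="\<lambda>e. x e + xa e" in exI) (simp add: twisted_d_add fun_eq_iff)

lemma d_image_scale: "y \<in> d_image S \<Longrightarrow> (\<lambda>v. c * y v) \<in> d_image S"
  unfolding d_image_def supported_def
  by (clarsimp, rule_tac x="\<lambda>e. c * x e" in exI) (simp add: twisted_d_scale fun_eq_iff)

lemma d_image_mono: "y \<in> d_image S \<Longrightarrow> S \<subseteq> T \<Longrightarrow> y \<in> d_image T"
  unfolding d_image_def supported_def by blast

lemma twisted_d_unit_cochain_in_d_image: "e \<in> S \<Longrightarrow> twisted_d G (unit_cochain e) \<in> d_image S"
  unfolding d_image_def supported_def unit_cochain_def by auto

definition d_kernel :: "'e set \<Rightarrow> ('e \<Rightarrow> ('e,'k::field) ratfun) set" where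
  "d_kernel S = {x. supported S x \<and> (\<forall>v\<in>verts G. twisted_d G x v = 0)}"

lemma subspace_d_kernel: "cochains.subspace (d_kernel S :: ('e \<Rightarrow> ('e,'k::field) ratfun) set)"
proof (rule cochains.subspaceI)
  show "(0::'e \<Rightarrow> ('e,'k) ratfun) \<in> d_kernel S"
    unfolding d_kernel_def supported_def zero_fun_def by (simp add: twisted_d_zero)
next
  fix x y :: "'e \<Rightarrow> ('e,'k) ratfun" assume "x \<in> d_kernel S" "y \<in> d_kernel S"
  moreover have "x + y = (\<lambda>e. x e + y e)" by (simp add: fun_eq_iff)
  ultimately show "x + y \<in> d_kernel S" unfolding d_kernel_def supported_def by (simp add: twisted_d_add)
next
  fix c :: "('e,'k) ratfun" and x :: "'e \<Rightarrow> ('e,'k) ratfun" assume "x \<in> d_kernel S"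
  then show "(\<lambda>e. c * x e) \<in> d_kernel S" unfolding d_kernel_def supported_def
    by (simp add: twisted_d_scale)
qed

lemma d_kernel_mono: "S \<subseteq> T \<Longrightarrow> d_kernel S \<subseteq> d_kernel T"
  unfolding d_kernel_def supported_def by auto

lemma d_kernel_insert_vanishing: "x \<in> d_kernel (insert e S) \<Longrightarrow> x e = 0 \<Longrightarrow> x \<in> d_kernel S"
  unfolding d_kernel_def supported_def by auto

section \<open>Components of a set of arcs\<close>

definition adj :: "'e set \<Rightarrow> ('v \<times> 'v) set" where
  "adj S = (\<Union>e\<in>S. {(tail G e, head G e), (head G e, tail G e)})"

definition component :: "'e set \<Rightarrow> 'v \<Rightarrow> 'v set" where
  "component S v = {u. (v, u) \<in> (adj S)\<^sup>*}"

definition sub_components :: "'e set \<Rightarrow> 'v set set" where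
  "sub_components S = component S ` verts G"

lemma adj_rtrancl_sym: "(u, v) \<in> (adj S)\<^sup>* \<Longrightarrow> (v, u) \<in> (adj S)\<^sup>*"
  using sym_rtrancl[of "adj S"] unfolding sym_def adj_def by blast

lemma component_self [simp]: "v \<in> component S v"
  unfolding component_def by simp

lemma component_eq_iff: "u \<in> component S v \<longleftrightarrow> component S u = component S v"
  unfolding component_def set_eq_iff mem_Collect_eq
  by (metis adj_rtrancl_sym rtrancl.rtrancl_refl rtrancl_trans)

lemma component_closed: "u \<in> component S x \<Longrightarrow> (u, w) \<in> adj S \<Longrightarrow> w \<in> component S x"
  unfolding component_def by (simp add: rtrancl.rtrancl_into_rtrancl)

lemma component_mono: "S \<subseteq> T \<Longrightarrow> component S v \<subseteq> component T v"
  unfolding component_def adj_def by (auto elim!: rtrancl_mono[THEN subsetD, rotated])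

lemma arc_ends_same_component: "e \<in> S \<Longrightarrow> head G e \<in> component S (tail G e)"
  unfolding component_def adj_def by auto

lemma component_subset_verts:
  assumes "S \<subseteq> arcs G" "v \<in> verts G"
  shows "component S v \<subseteq> verts G"
proof
  fix u assume "u \<in> component S v"
  then have "(v, u) \<in> (adj S)\<^sup>*" by (simp add: component_def)
  then show "u \<in> verts G"
    by (induction rule: rtrancl_induct) (use assms in \<open>auto simp: adj_def\<close>)
qed

lemma finite_component: "S \<subseteq> arcs G \<Longrightarrow> v \<in> verts G \<Longrightarrow> finite (component S v)"
  using component_subset_verts finite_verts by (rule finite_subset)

lemma finite_sub_components: "finite (sub_components S)"
  unfolding sub_components_def by simp

lemma component_in_sub_components: "v \<in> verts G \<Longrightarrow> component S v \<in> sub_components S"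
  unfolding sub_components_def by blast

lemma sub_components_disjoint:
  "C \<in> sub_components S \<Longrightarrow> D \<in> sub_components S \<Longrightarrow> C \<noteq> D \<Longrightarrow> C \<inter> D = {}"
  unfolding sub_components_def using component_eq_iff by blast

lemma component_insert:
  fixes S :: "'e set" and e :: 'e
  defines "Ct \<equiv> component S (tail G e)" and "Ch \<equiv> component S (head G e)"
  shows "component (insert e S) v
    = (if component S v = Ct \<or> component S v = Ch then Ct \<union> Ch else component S v)"
    (is "_ = ?R")
proof
  have sub: "component S x \<subseteq> component (insert e S) x" for x
    by (rule component_mono) auto
  have ends: "component (insert e S) (tail G e) = component (insert e S) (head G e)"
    using arc_ends_same_component[of e "insert e S"] component_eq_iff by blast
  have "Ct \<union> Ch \<subseteq> component (insert e S) v" if "component S v = Ct \<or> component S v = Ch"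
  proof -
    have "component (insert e S) v = component (insert e S) (tail G e)"
      using that sub ends component_eq_iff unfolding Ct_def Ch_def by (metis component_self subsetD)
    then show ?thesis using sub ends unfolding Ct_def Ch_def by auto
  qed
  then show "?R \<subseteq> component (insert e S) v" using sub by auto
next
  have closed: "w \<in> ?R" if "u \<in> ?R" "(u, w) \<in> adj (insert e S)" for u w
  proof -
    have "(u, w) \<in> adj S \<or> {u, w} = {tail G e, head G e}"
      using that(2) unfolding adj_def by auto
    then show ?thesis
    proof
      assume uw: "(u, w) \<in> adj S"
      show ?thesis
      proof (cases "component S v = Ct \<or> component S v = Ch")
        case True
        then have "u \<in> Ct \<union> Ch" using that(1) by simp
        then have "w \<in> Ct \<union> Ch"
          using component_closed[OF _ uw, of "tail G e"] component_closed[OF _ uw, of "head G e"]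
          unfolding Ct_def Ch_def by blast
        then show ?thesis using True by simp
      next
        case False
        then show ?thesis using that(1) component_closed[OF _ uw, of v] by simp
      qed
    next
      assume "{u, w} = {tail G e, head G e}"
      then have u: "u = tail G e \<or> u = head G e" and w: "w = tail G e \<or> w = head G e" by blast+
      show ?thesis
      proof (cases "component S v = Ct \<or> component S v = Ch")
        case True
        moreover have "w \<in> Ct \<union> Ch" using w unfolding Ct_def Ch_def by auto
        ultimately show ?thesis by simp
      next
        case False
        then have "u \<in> component S v" using that(1) by simp
        then have "component S u = component S v" using component_eq_iff by blast
        then show ?thesis using u False unfolding Ct_def Ch_def by auto
      qed
    qed
  qed
  show "component (insert e S) v \<subseteq> ?R"
  proof
    fix u assume "u \<in> component (insert e S) v"
    then have "(v, u) \<in> (adj (insert e S))\<^sup>*" by (simp add: component_def)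
    then show "u \<in> ?R"
      by (induction rule: rtrancl_induct) (use closed in \<open>auto simp: Ct_def Ch_def\<close>)
  qed
qed

lemma component_insert_same:
  assumes "head G e \<in> component S (tail G e)"
  shows "component (insert e S) v = component S v"
  using assms component_eq_iff by (simp add: component_insert)

lemma sub_components_insert_same:
  "head G e \<in> component S (tail G e) \<Longrightarrow> sub_components (insert e S) = sub_components S"
  unfolding sub_components_def by (simp add: component_insert_same)

lemma sub_components_insert_merge:
  fixes S :: "'e set" and e :: 'e
  defines "Ct \<equiv> component S (tail G e)" and "Ch \<equiv> component S (head G e)"
  assumes "e \<in> arcs G"
  shows "sub_components (insert e S) = insert (Ct \<union> Ch) (sub_components S - {Ct, Ch})"
proof
  show "sub_components (insert e S) \<subseteq> insert (Ct \<union> Ch) (sub_components S - {Ct, Ch})"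
    unfolding sub_components_def component_insert Ct_def Ch_def by auto
next
  have "Ct \<union> Ch = component (insert e S) (tail G e)"
    unfolding component_insert Ct_def Ch_def by simp
  moreover have "X \<in> sub_components (insert e S)" if X: "X \<in> sub_components S - {Ct, Ch}" for X
  proof -
    obtain v where "v \<in> verts G" "X = component S v" "X \<noteq> Ct" "X \<noteq> Ch"
      using X unfolding sub_components_def by blast
    then have "component (insert e S) v = X" by (simp add: component_insert Ct_def Ch_def)
    then show ?thesis unfolding sub_components_def using \<open>v \<in> verts G\<close> by blast
  qed
  ultimately show "insert (Ct \<union> Ch) (sub_components S - {Ct, Ch}) \<subseteq> sub_components (insert e S)"
    using assms(3) unfolding sub_components_def by auto
qed

definition excess :: "'e set \<Rightarrow> 'v set \<Rightarrow> int" where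
  "excess S C = int (card {e\<in>S. tail G e \<in> C}) - int (card C)"

definition rho_sub :: "'e set \<Rightarrow> int" where
  "rho_sub S = (\<Sum>C\<in>sub_components S. max 0 (excess S C))"

lemma excess_insert:
  assumes "finite S" "e \<notin> S"
  shows "excess (insert e S) C = excess S C + (if tail G e \<in> C then 1 else 0)"
proof -
  have "{e'\<in>insert e S. tail G e' \<in> C}
      = (if tail G e \<in> C then insert e {e'\<in>S. tail G e' \<in> C} else {e'\<in>S. tail G e' \<in> C})"
    by auto
  then show ?thesis using assms unfolding excess_def by simp
qed

lemma excess_Un:
  assumes "finite S" "finite C" "finite D" "C \<inter> D = {}"
  shows "excess S (C \<union> D) = excess S C + excess S D"
proof -
  have "{e\<in>S. tail G e \<in> C \<union> D} = {e\<in>S. tail G e \<in> C} \<union> {e\<in>S. tail G e \<in> D}" by auto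
  moreover have "{e\<in>S. tail G e \<in> C} \<inter> {e\<in>S. tail G e \<in> D} = {}" using assms(4) by auto
  ultimately have "card {e\<in>S. tail G e \<in> C \<union> D} = card {e\<in>S. tail G e \<in> C} + card {e\<in>S. tail G e \<in> D}"
    using assms(1) by (simp add: card_Un_disjoint)
  moreover have "card (C \<union> D) = card C + card D" using assms(2-4) by (simp add: card_Un_disjoint)
  ultimately show ?thesis unfolding excess_def by simp
qed

section \<open>The image of the coboundary on a component\<close>

definition covers :: "'k::field itself \<Rightarrow> 'e set \<Rightarrow> 'v set \<Rightarrow> bool" where
  "covers _ S C \<longleftrightarrow> {y :: 'v \<Rightarrow> ('e,'k) ratfun. supported C y} \<subseteq> d_image S"

text \<open>On a component \<open>C\<close> of \<open>S\<close> that is a tree, \<open>\<phi>\<close> is the twisted potential: the image of \<open>d\<close>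
  on \<open>C\<close> is its annihilator. Its monomial values keep it generic for every arc outside \<open>S\<close>.\<close>

definition tree_functional :: "'e set \<Rightarrow> 'v set \<Rightarrow> ('v \<Rightarrow> ('e,'k::field) ratfun) \<Rightarrow> bool" where
  "tree_functional S C \<phi> \<longleftrightarrow> supported C \<phi> \<and> (\<forall>v\<in>C. laurent_monomial S (\<phi> v))
     \<and> (\<forall>e\<in>S. \<phi> (head G e) = psi e * \<phi> (tail G e))
     \<and> (\<forall>y. supported C y \<longrightarrow> pairing \<phi> y = 0 \<longrightarrow> y \<in> d_image S)"

lemma tree_functional_annihilates_d_image:
  assumes "tree_functional S C \<phi>" "y \<in> d_image S"
  shows "pairing \<phi> y = 0"
proof -
  obtain x where x: "supported S x" "y = twisted_d G x"
    using assms(2) unfolding d_image_def by blast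
  have "x e * (\<phi> (head G e) - psi e * \<phi> (tail G e)) = 0" for e
    using assms(1) x(1) unfolding tree_functional_def supported_def by (cases "e \<in> S") auto
  then show ?thesis unfolding x(2) pairing_twisted_d by (simp add: sum.neutral)
qed

lemma tree_functional_new_arc:
  assumes "tree_functional S C \<phi>" "e \<notin> S" "tail G e \<in> C \<or> head G e \<in> C"
  shows "\<phi> (head G e) - psi e * \<phi> (tail G e) \<noteq> 0"
proof -
  have supp: "supported C \<phi>" and mono: "\<And>v. v \<in> C \<Longrightarrow> laurent_monomial S (\<phi> v)"
    using assms(1) unfolding tree_functional_def by auto
  have psi_nonzero: "psi e \<noteq> 0"
    using laurent_monomial_psi laurent_monomial_nonzero by blast
  consider "tail G e \<in> C" "head G e \<in> C" | "tail G e \<in> C" "head G e \<notin> C" | "tail G e \<notin> C" "head G e \<in> C"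
    using assms(3) by blast
  then show ?thesis
  proof cases
    case 1
    then show ?thesis using laurent_monomial_ne_psi_mult[OF mono mono assms(2)] by simp
  next
    case 2
    then show ?thesis using supp mono[of "tail G e"] psi_nonzero laurent_monomial_nonzero
      unfolding supported_def by auto
  next
    case 3
    then show ?thesis using supp mono[of "head G e"] laurent_monomial_nonzero
      unfolding supported_def by auto
  qed
qed

lemma tree_functional_insert_away:
  fixes \<phi> :: "'v \<Rightarrow> ('e,'k::field) ratfun"
  assumes "tree_functional S C \<phi>" "tail G e \<notin> C" "head G e \<notin> C"
  shows "tree_functional (insert e S) C \<phi>"
proof -
  have "\<phi> (tail G e) = 0" "\<phi> (head G e) = 0"
    using assms unfolding tree_functional_def supported_def by auto
  moreover have "y \<in> d_image (insert e S)" if "y \<in> d_image S" for y :: "'v \<Rightarrow> ('e,'k) ratfun"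
    using that d_image_mono by blast
  moreover have "laurent_monomial (insert e S) r" if "laurent_monomial S r" for r :: "('e,'k) ratfun"
    using that laurent_monomial_mono by blast
  ultimately show ?thesis using assms(1) unfolding tree_functional_def by auto
qed

lemma covers_mono:
  fixes K :: "'k::field itself"
  shows "covers K S C \<Longrightarrow> S \<subseteq> T \<Longrightarrow> covers K T C"
  unfolding covers_def using d_image_mono by blast

lemma covers_Un:
  fixes K :: "'k::field itself"
  assumes "covers K S C" "covers K S D"
  shows "covers K S (C \<union> D)"
proof -
  have "y \<in> d_image S" if y: "supported (C \<union> D) y" for y :: "'v \<Rightarrow> ('e,'k) ratfun"
  proof -
    define yC where "yC = (\<lambda>v. if v \<in> C then y v else 0)"
    have "yC \<in> d_image S"
      using assms(1) unfolding covers_def yC_def supported_def by auto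
    moreover have "(\<lambda>v. y v - yC v) \<in> d_image S"
      using assms(2) y unfolding covers_def yC_def supported_def by auto
    ultimately have "(\<lambda>v. yC v + (y v - yC v)) \<in> d_image S" by (rule d_image_add)
    then show "y \<in> d_image S" by simp
  qed
  then show ?thesis unfolding covers_def by blast
qed

lemma supported_twisted_d_unit_cochain:
  "e \<in> arcs G \<Longrightarrow> tail G e \<in> C \<Longrightarrow> head G e \<in> C \<Longrightarrow> supported C (twisted_d G (unit_cochain e))"
  unfolding supported_def by (auto simp: twisted_d_unit_cochain)

lemma d_image_insert_unit_cochain:
  assumes "e \<in> arcs G" "(\<lambda>v. y v - c * twisted_d G (unit_cochain e) v) \<in> d_image S"
  shows "y \<in> d_image (insert e S)"
proof -
  have "(\<lambda>v. y v - c * twisted_d G (unit_cochain e) v) \<in> d_image (insert e S)"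
    using assms(2) d_image_mono by blast
  moreover have "(\<lambda>v. c * twisted_d G (unit_cochain e) v) \<in> d_image (insert e S)"
    by (intro d_image_scale twisted_d_unit_cochain_in_d_image) simp
  ultimately have "(\<lambda>v. (y v - c * twisted_d G (unit_cochain e) v) + c * twisted_d G (unit_cochain e) v)
      \<in> d_image (insert e S)"
    by (rule d_image_add)
  then show ?thesis by simp
qed

lemma d_image_tree_Un:
  assumes "tree_functional S C \<phi>" "C \<inter> D = {}" "supported (C \<union> D) z" "pairing \<phi> z = 0"
    and "(\<lambda>v. if v \<in> D then z v else 0) \<in> d_image S"
  shows "z \<in> d_image S"
proof -
  define zC where "zC = (\<lambda>v. if v \<in> C then z v else 0)"
  have "supported C \<phi>" using assms(1) unfolding tree_functional_def by blast
  then have "pairing \<phi> zC = pairing \<phi> z" unfolding zC_def by (rule pairing_restrict)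
  then have "pairing \<phi> zC = 0" using assms(4) by simp
  moreover have "supported C zC" unfolding zC_def supported_def by auto
  ultimately have "zC \<in> d_image S" using assms(1) unfolding tree_functional_def by blast
  from d_image_add[OF this assms(5)] have "(\<lambda>v. zC v + (if v \<in> D then z v else 0)) \<in> d_image S" .
  moreover have "(\<lambda>v. zC v + (if v \<in> D then z v else 0)) = z"
    using assms(2,3) unfolding zC_def supported_def by (auto simp: fun_eq_iff)
  ultimately show ?thesis by simp
qed

lemma covers_insert_tree:
  fixes K :: "'k::field itself" and \<phi> :: "'v \<Rightarrow> ('e,'k) ratfun"
  assumes T: "tree_functional S C \<phi>" and D: "covers K S D" and disj: "C \<inter> D = {}"
    and e: "e \<in> arcs G" "e \<notin> S" "tail G e \<in> C \<union> D" "head G e \<in> C \<union> D" "tail G e \<in> C \<or> head G e \<in> C"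
  shows "covers K (insert e S) (C \<union> D)"
  unfolding covers_def
proof (intro subsetI, clarify)
  fix y :: "'v \<Rightarrow> ('e,'k) ratfun" assume y: "supported (C \<union> D) y"
  define w :: "'v \<Rightarrow> ('e,'k) ratfun" where "w = twisted_d G (unit_cochain e)"
  have pw: "pairing \<phi> w \<noteq> 0"
    unfolding w_def pairing_twisted_d_unit_cochain[OF e(1)] using tree_functional_new_arc[OF T e(2,5)] .
  define z where "z = (\<lambda>v. y v - (pairing \<phi> y / pairing \<phi> w) * w v)"
  have "supported (C \<union> D) z"
    using y supported_twisted_d_unit_cochain[OF e(1,3,4)] unfolding z_def w_def supported_def by auto
  moreover have "pairing \<phi> z = 0" unfolding z_def pairing_diff pairing_scale using pw by simp
  moreover have "(\<lambda>v. if v \<in> D then z v else 0) \<in> d_image S"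
    using D unfolding covers_def supported_def by auto
  ultimately have "z \<in> d_image S" by (rule d_image_tree_Un[OF T disj])
  then show "y \<in> d_image (insert e S)"
    using d_image_insert_unit_cochain[OF e(1)] unfolding z_def w_def by blast
qed

lemma d_image_insert_merge_trees:
  fixes \<phi>1 \<phi>2 :: "'v \<Rightarrow> ('e,'k::field) ratfun"
  assumes T1: "tree_functional S C1 \<phi>1" and T2: "tree_functional S C2 \<phi>2" and disj: "C1 \<inter> C2 = {}"
    and e: "e \<in> arcs G" "e \<notin> S" "tail G e \<in> C1" "head G e \<in> C2"
    and c: "c \<noteq> 0" "\<phi>1 (head G e) + c * \<phi>2 (head G e) = psi e * (\<phi>1 (tail G e) + c * \<phi>2 (tail G e))"
    and y: "supported (C1 \<union> C2) y" "pairing (\<lambda>v. \<phi>1 v + c * \<phi>2 v) y = 0"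
  shows "y \<in> d_image (insert e S)"
proof -
  define w :: "'v \<Rightarrow> ('e,'k) ratfun" where "w = twisted_d G (unit_cochain e)"
  have pw1: "pairing \<phi>1 w \<noteq> 0"
    unfolding w_def pairing_twisted_d_unit_cochain[OF e(1)] using tree_functional_new_arc[OF T1 e(2)] e(3)
      by blast
  have pw: "pairing (\<lambda>v. \<phi>1 v + c * \<phi>2 v) w = 0"
    unfolding w_def pairing_twisted_d_unit_cochain[OF e(1)] using c(2) by simp
  define z where "z = (\<lambda>v. y v - (pairing \<phi>1 y / pairing \<phi>1 w) * w v)"
  have z1: "pairing \<phi>1 z = 0" unfolding z_def pairing_diff pairing_scale using pw1 by simp
  have "pairing (\<lambda>v. \<phi>1 v + c * \<phi>2 v) z = 0"
    unfolding z_def pairing_diff pairing_scale using pw y(2) by simp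
  then have z2: "pairing \<phi>2 z = 0" unfolding pairing_add_scale_left using z1 c(1) by simp
  have zsupp: "supported (C1 \<union> C2) z"
    using y(1) supported_twisted_d_unit_cochain[OF e(1), of "C1 \<union> C2"] e(3,4)
    unfolding z_def w_def supported_def by auto
  have "supported C2 \<phi>2" using T2 unfolding tree_functional_def by blast
  from pairing_restrict[OF this] have "pairing \<phi>2 (\<lambda>v. if v \<in> C2 then z v else 0) = 0"
    using z2 by simp
  then have "(\<lambda>v. if v \<in> C2 then z v else 0) \<in> d_image S"
    using T2 unfolding tree_functional_def supported_def by auto
  with d_image_tree_Un[OF T1 disj zsupp z1] have "z \<in> d_image S" .
  then show ?thesis using d_image_insert_unit_cochain[OF e(1)] unfolding z_def w_def by blast
qed

lemma tree_functional_merge: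
  fixes \<phi>1 \<phi>2 :: "'v \<Rightarrow> ('e,'k::field) ratfun" and e :: 'e
  defines "c \<equiv> psi e * \<phi>1 (tail G e) / \<phi>2 (head G e)"
  assumes T1: "tree_functional S C1 \<phi>1" and T2: "tree_functional S C2 \<phi>2" and disj: "C1 \<inter> C2 = {}"
    and e: "e \<in> arcs G" "e \<notin> S" "tail G e \<in> C1" "head G e \<in> C2"
  shows "tree_functional (insert e S) (C1 \<union> C2) (\<lambda>v. \<phi>1 v + c * \<phi>2 v)"
proof -
  have s1: "supported C1 \<phi>1" and s2: "supported C2 \<phi>2"
    and m1: "\<And>v. v \<in> C1 \<Longrightarrow> laurent_monomial (insert e S) (\<phi>1 v)"
    and m2: "\<And>v. v \<in> C2 \<Longrightarrow> laurent_monomial (insert e S) (\<phi>2 v)"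
    using T1 T2 laurent_monomial_mono[of S _ "insert e S"] unfolding tree_functional_def by auto
  have zeros: "\<phi>2 (tail G e) = 0" "\<phi>1 (head G e) = 0"
    using s1 s2 e(3,4) disj unfolding supported_def by auto
  have "laurent_monomial (insert e S) (psi e)"
    using laurent_monomial_psi laurent_monomial_mono by blast
  then have mc: "laurent_monomial (insert e S) c"
    unfolding c_def using m1 m2 e(3,4) by (intro laurent_monomial_divide laurent_monomial_mult)
  have arc: "\<phi>1 (head G e) + c * \<phi>2 (head G e) = psi e * (\<phi>1 (tail G e) + c * \<phi>2 (tail G e))"
    using zeros laurent_monomial_nonzero[OF m2[OF e(4)]] unfolding c_def by simp
  show ?thesis
    unfolding tree_functional_def
  proof (intro conjI ballI allI impI)
    show "supported (C1 \<union> C2) (\<lambda>v. \<phi>1 v + c * \<phi>2 v)"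
      using s1 s2 unfolding supported_def by simp
    show "laurent_monomial (insert e S) (\<phi>1 v + c * \<phi>2 v)" if "v \<in> C1 \<union> C2" for v
      using that disj s1 s2 m1 m2 laurent_monomial_mult[OF mc] unfolding supported_def by auto
    show "\<phi>1 (head G e') + c * \<phi>2 (head G e') = psi e' * (\<phi>1 (tail G e') + c * \<phi>2 (tail G e'))"
      if "e' \<in> insert e S" for e'
      using that arc T1 T2 unfolding tree_functional_def by (auto simp: algebra_simps)
    show "y \<in> d_image (insert e S)"
      if "supported (C1 \<union> C2) y" "pairing (\<lambda>v. \<phi>1 v + c * \<phi>2 v) y = 0" for y
      using d_image_insert_merge_trees[OF T1 T2 disj e _ arc that] mc laurent_monomial_nonzero by blast
  qed
qed

section \<open>Adding arcs one at a time\<close>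

definition component_invariant :: "'k::field itself \<Rightarrow> 'e set \<Rightarrow> 'v set \<Rightarrow> bool" where
  "component_invariant K S C \<longleftrightarrow> (0 \<le> excess S C \<and> covers K S C)
     \<or> (excess S C = -1 \<and> (\<exists>\<phi> :: 'v \<Rightarrow> ('e,'k) ratfun. tree_functional S C \<phi>))"

definition subgraph_invariant :: "'k::field itself \<Rightarrow> 'e set \<Rightarrow> bool" where
  "subgraph_invariant K S \<longleftrightarrow> (\<forall>C\<in>sub_components S. component_invariant K S C)"

lemma covers_empty:
  fixes K :: "'k::field itself"
  shows "covers K S {}"
proof -
  have "{y :: 'v \<Rightarrow> ('e,'k) ratfun. supported {} y} = {\<lambda>v. 0}"
    unfolding supported_def by auto
  then show ?thesis unfolding covers_def using zero_in_d_image by auto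
qed

lemma component_invariant_excess: "component_invariant K S C \<Longrightarrow> -1 \<le> excess S C"
  unfolding component_invariant_def by auto

lemma component_invariant_insert_away:
  fixes K :: "'k::field itself"
  assumes "component_invariant K S C" "finite S" "e \<notin> S" "tail G e \<notin> C" "head G e \<notin> C"
  shows "component_invariant K (insert e S) C"
  using assms covers_mono[of K S C "insert e S"] tree_functional_insert_away[of S C _ e]
  unfolding component_invariant_def by (auto simp: excess_insert)

lemma component_invariant_insert_inside:
  fixes K :: "'k::field itself"
  assumes I: "component_invariant K S C" and S: "finite S"
    and e: "e \<in> arcs G" "e \<notin> S" "tail G e \<in> C" "head G e \<in> C"
  shows "component_invariant K (insert e S) C"
proof -
  have "covers K (insert e S) C"
    using I unfolding component_invariant_def
  proof (elim disjE conjE exE)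
    assume "covers K S C"
    then show ?thesis by (rule covers_mono) auto
  next
    fix \<phi> :: "'v \<Rightarrow> ('e,'k) ratfun" assume "tree_functional S C \<phi>"
    from covers_insert_tree[OF this covers_empty _ e(1,2)] e(3,4) show ?thesis by simp
  qed
  then show ?thesis
    using component_invariant_excess[OF I] e S unfolding component_invariant_def
      by (simp add: excess_insert)
qed

lemma component_invariant_insert_merge:
  fixes K :: "'k::field itself"
  assumes I: "component_invariant K S C" "component_invariant K S D" and disj: "C \<inter> D = {}"
    and fin: "finite S" "finite C" "finite D"
    and e: "e \<in> arcs G" "e \<notin> S" "tail G e \<in> C" "head G e \<in> D"
  shows "component_invariant K (insert e S) (C \<union> D)"
proof -
  have ex: "excess (insert e S) (C \<union> D) = excess S C + excess S D + 1"
  proof -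
    have "tail G e \<notin> D" using disj e(3) by blast
    then show ?thesis using fin disj e(2,3) by (simp add: excess_insert excess_Un)
  qed
  have disj': "D \<inter> C = {}" using disj by blast
  from I(1)[unfolded component_invariant_def] show ?thesis
  proof (elim disjE conjE exE)
    assume "0 \<le> excess S C" "covers K S C"
    from I(2)[unfolded component_invariant_def] show ?thesis
    proof (elim disjE conjE exE)
      assume "0 \<le> excess S D" "covers K S D"
      with \<open>0 \<le> excess S C\<close> \<open>covers K S C\<close> show ?thesis
        using ex covers_Un covers_mono[of K S "C \<union> D" "insert e S"]
        unfolding component_invariant_def by auto
    next
      fix \<phi> :: "'v \<Rightarrow> ('e,'k) ratfun" assume "excess S D = -1" "tree_functional S D \<phi>"
      from covers_insert_tree[OF this(2) \<open>covers K S C\<close> disj' e(1,2)] e(3,4)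
      show ?thesis using ex \<open>excess S D = -1\<close> \<open>0 \<le> excess S C\<close> unfolding component_invariant_def
        by (simp add: Un_commute)
    qed
  next
    fix \<phi> :: "'v \<Rightarrow> ('e,'k) ratfun" assume C: "excess S C = -1" "tree_functional S C \<phi>"
    from I(2)[unfolded component_invariant_def] show ?thesis
    proof (elim disjE conjE exE)
      assume "0 \<le> excess S D" "covers K S D"
      from covers_insert_tree[OF C(2) this(2) disj e(1,2)] e(3,4)
      show ?thesis using ex C(1) \<open>0 \<le> excess S D\<close> unfolding component_invariant_def by simp
    next
      fix \<chi> :: "'v \<Rightarrow> ('e,'k) ratfun" assume "excess S D = -1" "tree_functional S D \<chi>"
      from tree_functional_merge[OF C(2) this(2) disj e] show ?thesis
        using ex C(1) \<open>excess S D = -1\<close> unfolding component_invariant_def by auto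
    qed
  qed
qed

lemma sub_components_member: "C \<in> sub_components S \<Longrightarrow> v \<in> C \<Longrightarrow> C = component S v"
  unfolding sub_components_def using component_eq_iff by blast

lemma subgraph_invariant_empty:
  fixes K :: "'k::field itself"
  shows "subgraph_invariant K {}"
  unfolding subgraph_invariant_def
proof
  fix C assume "C \<in> sub_components {}"
  then obtain v where v: "v \<in> verts G" "C = {v}"
    unfolding sub_components_def component_def adj_def by auto
  define \<phi> :: "'v \<Rightarrow> ('e,'k) ratfun" where "\<phi> = (\<lambda>u. if u = v then 1 else 0)"
  have "y \<in> d_image {}" if "supported {v} y" "pairing \<phi> y = 0" for y
  proof -
    have "pairing \<phi> y = y v"
      unfolding pairing_def \<phi>_def using v(1)
        by (simp add: if_distrib[of "\<lambda>a. a * _"] sum.delta cong: if_cong)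
    then have "y = (\<lambda>u. 0)" using that unfolding supported_def by auto
    then show ?thesis using zero_in_d_image by simp
  qed
  then have "tree_functional {} {v} \<phi>"
    unfolding tree_functional_def supported_def \<phi>_def by (auto simp: laurent_monomial_one)
  moreover have "excess {} {v} = -1" unfolding excess_def by simp
  ultimately show "component_invariant K {} C" unfolding component_invariant_def v(2) by blast
qed

lemma subgraph_invariant_insert:
  fixes K :: "'k::field itself"
  assumes I: "subgraph_invariant K S" and S: "S \<subseteq> arcs G" and e: "e \<in> arcs G" "e \<notin> S"
  shows "subgraph_invariant K (insert e S)"
proof -
  define Ct where "Ct = component S (tail G e)"
  define Ch where "Ch = component S (head G e)"
  have fin: "finite S" using S finite_arcs by (rule finite_subset)
  have Ct: "Ct \<in> sub_components S" "tail G e \<in> Ct" and Ch: "Ch \<in> sub_components S" "head G e \<in> Ch"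
    unfolding Ct_def Ch_def using e(1) by (auto intro: component_in_sub_components)
  have away: "component_invariant K (insert e S) C" if "C \<in> sub_components S" "C \<noteq> Ct" "C \<noteq> Ch" for C
    using that I fin e(2) sub_components_member[OF that(1)] unfolding subgraph_invariant_def Ct_def Ch_def
    by (metis component_invariant_insert_away)
  show ?thesis
  proof (cases "head G e \<in> Ct")
    case True
    then have "Ch = Ct" unfolding Ch_def Ct_def using component_eq_iff by blast
    then have "component_invariant K (insert e S) Ct"
      using I Ct Ch True fin e unfolding subgraph_invariant_def
        by (blast intro: component_invariant_insert_inside)
    then show ?thesis
      using away True \<open>Ch = Ct\<close> sub_components_insert_same[of e S] unfolding subgraph_invariant_def Ct_def
        by metis
  next
    case False
    then have "Ct \<inter> Ch = {}"
      using Ct Ch sub_components_disjoint by blast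
    moreover have "finite Ct" "finite Ch" unfolding Ct_def Ch_def using S e(1)
      by (auto intro: finite_component)
    ultimately have "component_invariant K (insert e S) (Ct \<union> Ch)"
      using I Ct Ch fin e unfolding subgraph_invariant_def
        by (blast intro: component_invariant_insert_merge)
    then show ?thesis
      using away sub_components_insert_merge[OF e(1)] unfolding subgraph_invariant_def Ct_def Ch_def
        by auto
  qed
qed

lemma subgraph_invariant:
  fixes K :: "'k::field itself"
  assumes "S \<subseteq> arcs G"
  shows "subgraph_invariant K S"
proof -
  have "finite S" using assms finite_arcs by (rule finite_subset)
  then show ?thesis using assms
  proof (induction rule: finite_subset_induct')
    case empty
    then show ?case by (rule subgraph_invariant_empty)
  next
    case (insert e S)
    then show ?case using subgraph_invariant_insert by blast
  qed
qed

lemma rho_sub_insert_same: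
  assumes "finite S" "e \<in> arcs G" "e \<notin> S" "head G e \<in> component S (tail G e)"
  shows "rho_sub (insert e S) = rho_sub S + (if 0 \<le> excess S (component S (tail G e)) then 1 else 0)"
proof -
  define Ct where "Ct = component S (tail G e)"
  have tail_iff: "tail G e \<in> C \<longleftrightarrow> C = Ct" if C: "C \<in> sub_components S" for C
  proof
    assume "tail G e \<in> C"
    then show "C = Ct" unfolding Ct_def by (rule sub_components_member[OF C])
  qed (simp add: Ct_def)
  have "rho_sub (insert e S)
      = (\<Sum>C\<in>sub_components S. max 0 (excess S C) + (if C = Ct then (if 0 \<le> excess S Ct then 1 else 0) else 0))"
    unfolding rho_sub_def sub_components_insert_same[OF assms(4)]
  proof (rule sum.cong)
    fix C assume "C \<in> sub_components S"
    then show "max 0 (excess (insert e S) C)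
        = max 0 (excess S C) + (if C = Ct then (if 0 \<le> excess S Ct then 1 else 0) else 0)"
      using tail_iff[of C] assms(1,3) by (auto simp: excess_insert)
  qed simp
  also have "\<dots> = rho_sub S + (if 0 \<le> excess S Ct then 1 else 0)"
    unfolding rho_sub_def sum.distrib using finite_sub_components Ct_def assms(2)
    by (simp add: sum.delta' component_in_sub_components)
  finally show ?thesis unfolding Ct_def .
qed

lemma rho_sub_insert_merge:
  fixes S :: "'e set" and e :: 'e
  defines "Ct \<equiv> component S (tail G e)" and "Ch \<equiv> component S (head G e)"
  assumes S: "S \<subseteq> arcs G" and e: "e \<in> arcs G" "e \<notin> S" "head G e \<notin> Ct"
    and bounds: "-1 \<le> excess S Ct" "-1 \<le> excess S Ch"
  shows "rho_sub (insert e S) = rho_sub S + (if 0 \<le> excess S Ct \<and> 0 \<le> excess S Ch then 1 else 0)"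
proof -
  let ?rest = "sub_components S - {Ct, Ch}"
  have fin: "finite S" using S finite_arcs by (rule finite_subset)
  have Ct: "Ct \<in> sub_components S" "tail G e \<in> Ct" and Ch: "Ch \<in> sub_components S" "head G e \<in> Ch"
    unfolding Ct_def Ch_def using e(1) by (auto intro: component_in_sub_components)
  have disj: "Ct \<inter> Ch = {}" using Ct Ch e(3) sub_components_disjoint by blast
  have ends_rest: "tail G e \<notin> C" "head G e \<notin> C" if C: "C \<in> ?rest" for C
    using sub_components_member[of C S "tail G e"] sub_components_member[of C S "head G e"] C
    unfolding Ct_def Ch_def by auto
  have "Ct \<union> Ch \<notin> ?rest" using ends_rest Ct(2) by blast
  then have "rho_sub (insert e S)
      = max 0 (excess (insert e S) (Ct \<union> Ch)) + (\<Sum>C\<in>?rest. max 0 (excess (insert e S) C))"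
    unfolding rho_sub_def sub_components_insert_merge[OF e(1)] Ct_def[symmetric] Ch_def[symmetric]
    using finite_sub_components by simp
  also have "(\<Sum>C\<in>?rest. max 0 (excess (insert e S) C)) = (\<Sum>C\<in>?rest. max 0 (excess S C))"
    using ends_rest fin e(2) by (simp add: excess_insert)
  also have "excess (insert e S) (Ct \<union> Ch) = excess S Ct + excess S Ch + 1"
    using fin e(2) Ct Ch disj finite_component[OF S] e(1)
    by (simp add: excess_insert excess_Un Ct_def Ch_def disjoint_iff)
  also have "rho_sub S = max 0 (excess S Ct) + max 0 (excess S Ch) + (\<Sum>C\<in>?rest. max 0 (excess S C))"
  proof -
    have "Ch \<in> sub_components S - {Ct}" using disj Ct Ch by blast
    moreover have "sub_components S - {Ct} - {Ch} = ?rest" by blast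
    ultimately show ?thesis
      unfolding rho_sub_def using Ct(1) finite_sub_components
      by (simp add: sum.remove[of "sub_components S" Ct] sum.remove[of "sub_components S - {Ct}" Ch])
  qed
  ultimately show ?thesis using bounds by auto
qed

lemma rho_sub_insert:
  assumes "S \<subseteq> arcs G" "e \<in> arcs G" "e \<notin> S" and bounds: "\<And>C. C \<in> sub_components S \<Longrightarrow> -1 \<le> excess S C"
  shows "rho_sub (insert e S) = rho_sub S +
    (if 0 \<le> excess S (component S (tail G e)) \<and> 0 \<le> excess S (component S (head G e)) then 1 else 0)"
proof (cases "head G e \<in> component S (tail G e)")
  case True
  then have "component S (head G e) = component S (tail G e)" using component_eq_iff by blast
  with True show ?thesis
    using rho_sub_insert_same[OF finite_subset[OF assms(1) finite_arcs] assms(2,3)] by simp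
next
  case False
  then show ?thesis
    using rho_sub_insert_merge[OF assms(1-3) False] bounds assms(2) component_in_sub_components by simp
qed

lemma d_kernel_insert_unit_cochain_iff:
  assumes "e \<notin> S"
  shows "(\<exists>x\<in>d_kernel (insert e S). x e = (1 :: ('e,'k::field) ratfun))
    \<longleftrightarrow> (\<lambda>v. - twisted_d G (unit_cochain e :: 'e \<Rightarrow> ('e,'k) ratfun) v) \<in> d_image S"
    (is "_ \<longleftrightarrow> ?y \<in> _")
proof
  assume "\<exists>x\<in>d_kernel (insert e S). x e = (1 :: ('e,'k) ratfun)"
  then obtain x :: "'e \<Rightarrow> ('e,'k) ratfun" where x: "x \<in> d_kernel (insert e S)" "x e = 1"
    by blast
  define x' where "x' = (\<lambda>e'. x e' - unit_cochain e e')"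
  have "supported S x'" using x unfolding x'_def d_kernel_def supported_def unit_cochain_def by auto
  moreover have "?y = twisted_d G x'"
  proof
    fix v show "- twisted_d G (unit_cochain e) v = twisted_d G x' v"
      using x(1) unfolding x'_def twisted_d_diff d_kernel_def
        by (cases "v \<in> verts G") (auto simp: twisted_d_outside)
  qed
  ultimately show "?y \<in> d_image S" unfolding d_image_def by blast
next
  assume "?y \<in> d_image S"
  then obtain x' where x': "supported S x'" "?y = twisted_d G x'"
    unfolding d_image_def by blast
  define x where "x = (\<lambda>e'. unit_cochain e e' + x' e')"
  have x1: "x e = 1" using x'(1) assms unfolding x_def supported_def unit_cochain_def by simp
  have "twisted_d G x v = 0" for v
  proof -
    have "twisted_d G x' v = - twisted_d G (unit_cochain e) v" using fun_cong[OF x'(2), of v] by simp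
    then show ?thesis unfolding x_def twisted_d_add by simp
  qed
  then have "x \<in> d_kernel (insert e S)"
    using x'(1) unfolding x_def d_kernel_def supported_def unit_cochain_def by auto
  with x1 show "\<exists>x\<in>d_kernel (insert e S). x e = (1 :: ('e,'k) ratfun)" by blast
qed

lemma neg_unit_cochain_in_d_image_iff:
  fixes K :: "'k::field itself"
  assumes I: "subgraph_invariant K S" and e: "e \<in> arcs G" "e \<notin> S"
  shows "(\<lambda>v. - twisted_d G (unit_cochain e :: 'e \<Rightarrow> ('e,'k) ratfun) v) \<in> d_image S
    \<longleftrightarrow> 0 \<le> excess S (component S (tail G e)) \<and> 0 \<le> excess S (component S (head G e))"
    (is "?y \<in> _ \<longleftrightarrow> _")
proof
  have no_tree: False if "?y \<in> d_image S" "tree_functional S C \<phi>" "tail G e \<in> C \<or> head G e \<in> C"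
    for C and \<phi> :: "'v \<Rightarrow> ('e,'k) ratfun"
  proof -
    have "pairing \<phi> ?y = 0" using tree_functional_annihilates_d_image that(1,2) by blast
    then have "\<phi> (head G e) - psi e * \<phi> (tail G e) = 0"
      unfolding pairing_uminus pairing_twisted_d_unit_cochain[OF e(1)] by simp
    then show False using tree_functional_new_arc[OF that(2) e(2) that(3)] by simp
  qed
  show "0 \<le> excess S (component S (tail G e)) \<and> 0 \<le> excess S (component S (head G e))"
    if "?y \<in> d_image S"
    using I no_tree[OF that] e(1) component_in_sub_components[of _ S]
    unfolding subgraph_invariant_def component_invariant_def
      by (metis component_self head_in_verts tail_in_verts)
next
  assume "0 \<le> excess S (component S (tail G e)) \<and> 0 \<le> excess S (component S (head G e))"
  then have ct: "covers K S (component S (tail G e))" and ch: "covers K S (component S (head G e))"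
    using I e(1) component_in_sub_components[of _ S]
    unfolding subgraph_invariant_def component_invariant_def by force+
  have t: "(\<lambda>v. if v = tail G e then psi e :: ('e,'k) ratfun else 0) \<in> d_image S"
    using ct unfolding covers_def supported_def by (rule subsetD) simp
  have h: "(\<lambda>v. if v = head G e then -1 :: ('e,'k) ratfun else 0) \<in> d_image S"
    using ch unfolding covers_def supported_def by (rule subsetD) simp
  have "?y = (\<lambda>v. (if v = tail G e then psi e else 0) + (if v = head G e then -1 else 0))"
    by (auto simp: twisted_d_unit_cochain[OF e(1)] fun_eq_iff)
  with d_image_add[OF t h] show "?y \<in> d_image S" by simp
qed

lemma d_kernel_insert_span:
  fixes x0 :: "'e \<Rightarrow> ('e,'k::field) ratfun"
  assumes "x0 \<in> d_kernel (insert e S)" "x0 e = 1" "cochains.span B = d_kernel S"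
  shows "cochains.span (insert x0 B) = d_kernel (insert e S)"
proof
  have "B \<subseteq> d_kernel (insert e S)"
    using assms(3) cochains.span_superset d_kernel_mono[of S "insert e S"] by blast
  then show "cochains.span (insert x0 B) \<subseteq> d_kernel (insert e S)"
    using assms(1) by (intro cochains.span_minimal subspace_d_kernel) auto
next
  show "d_kernel (insert e S) \<subseteq> cochains.span (insert x0 B)"
  proof
    fix y :: "'e \<Rightarrow> ('e,'k) ratfun" assume y: "y \<in> d_kernel (insert e S)"
    have "y - (\<lambda>e'. y e * x0 e') \<in> d_kernel (insert e S)"
      using y assms(1) by (intro cochains.subspace_diff subspace_d_kernel cochains.subspace_scale)
    moreover have "(y - (\<lambda>e'. y e * x0 e')) e = 0" using assms(2) by simp
    ultimately have "y - (\<lambda>e'. y e * x0 e') \<in> cochains.span B"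
      unfolding assms(3) by (rule d_kernel_insert_vanishing)
    then show "y \<in> cochains.span (insert x0 B)" unfolding cochains.span_breakdown_eq by blast
  qed
qed

lemma d_kernel_insert_eq:
  assumes "\<not> (\<exists>x\<in>d_kernel (insert e S). x e = (1::('e,'k::field) ratfun))"
  shows "d_kernel (insert e S) = (d_kernel S :: ('e \<Rightarrow> ('e,'k) ratfun) set)"
proof
  show "d_kernel (insert e S) \<subseteq> (d_kernel S :: ('e \<Rightarrow> ('e,'k) ratfun) set)"
  proof
    fix x :: "'e \<Rightarrow> ('e,'k) ratfun" assume x: "x \<in> d_kernel (insert e S)"
    have "(\<lambda>e'. (1 / x e) * x e') \<in> d_kernel (insert e S)"
      by (rule cochains.subspace_scale[OF subspace_d_kernel x])
    show "x \<in> d_kernel S"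
    proof (rule d_kernel_insert_vanishing[OF x], rule ccontr)
      assume "x e \<noteq> 0"
      then show False using assms \<open>(\<lambda>e'. (1 / x e) * x e') \<in> d_kernel (insert e S)\<close> by force
    qed
  qed
qed (rule d_kernel_mono, blast)

lemma rho_sub_empty: "rho_sub {} = 0"
proof -
  have "excess {} C = -1" if "C \<in> sub_components {}" for C
    using that unfolding sub_components_def component_def adj_def excess_def by auto
  then show ?thesis unfolding rho_sub_def by (simp add: sum.neutral)
qed

lemma d_kernel_empty: "d_kernel {} = {0 :: 'e \<Rightarrow> ('e,'k::field) ratfun}"
  unfolding d_kernel_def supported_def by (auto simp: twisted_d_zero zero_fun_def fun_eq_iff)

lemma d_kernel_basis:
  assumes "S \<subseteq> arcs G"
  shows "\<exists>B :: ('e \<Rightarrow> ('e,'k::field) ratfun) set. finite B \<and> cochains.independent B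
    \<and> cochains.span B = d_kernel S \<and> int (card B) = rho_sub S"
proof -
  have "finite S" using assms finite_arcs by (rule finite_subset)
  then show ?thesis using assms
  proof (induction rule: finite_subset_induct')
    case empty
    show ?case
      by (rule exI[of _ "{}"]) (simp add: d_kernel_empty rho_sub_empty cochains.independent_empty)
  next
    case (insert e S)
    then obtain B :: "('e \<Rightarrow> ('e,'k) ratfun) set" where B: "finite B" "cochains.independent B"
      "cochains.span B = d_kernel S" "int (card B) = rho_sub S" by blast
    let ?grow = "0 \<le> excess S (component S (tail G e)) \<and> 0 \<le> excess S (component S (head G e))"
    have inv: "subgraph_invariant TYPE('k) S" using insert.hyps(3) by (rule subgraph_invariant)
    have rho: "rho_sub (insert e S) = rho_sub S + (if ?grow then 1 else 0)"
      using inv insert.hyps(2-4) unfolding subgraph_invariant_def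
      by (intro rho_sub_insert) (auto intro: component_invariant_excess)
    have grow_iff: "(\<exists>x\<in>d_kernel (insert e S). x e = (1 :: ('e,'k) ratfun)) \<longleftrightarrow> ?grow"
      using d_kernel_insert_unit_cochain_iff[OF insert.hyps(4)]
        neg_unit_cochain_in_d_image_iff[OF inv insert.hyps(2,4)] by blast
    show ?case
    proof (cases ?grow)
      case True
      then obtain x0 where x0: "x0 \<in> d_kernel (insert e S)" "x0 e = (1 :: ('e,'k) ratfun)"
        using grow_iff by blast
      have "x0 \<notin> cochains.span B"
        using x0(2) insert.hyps(4) unfolding B(3) d_kernel_def supported_def by auto
      moreover have "x0 \<notin> B" using calculation cochains.span_base by blast
      ultimately have "cochains.independent (insert x0 B)" "card (insert x0 B) = card B + 1"
        using B(1,2) by (simp_all add: cochains.independent_insert)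
      then show ?thesis
        using B rho True d_kernel_insert_span[OF x0 B(3)] by (intro exI[of _ "insert x0 B"]) simp
    next
      case False
      then have "d_kernel (insert e S) = (d_kernel S :: ('e \<Rightarrow> ('e,'k) ratfun) set)"
        using grow_iff by (intro d_kernel_insert_eq) blast
      then show ?thesis using B rho False by (intro exI[of _ B]) simp
    qed
  qed
qed

lemma twisted_kernel_eq_d_kernel: "twisted_kernel TYPE('k::field) G = d_kernel (arcs G)"
  unfolding twisted_kernel_def d_kernel_def supported_def by simp

section \<open>Components of the underlying undirected graph\<close>

lemma reachable_mk_symmetric_iff:
  assumes "u \<in> verts G"
  shows "reachable (with_proj (mk_symmetric G)) u v \<longleftrightarrow> (u, v) \<in> (adj (arcs G))\<^sup>*"
proof -
  have "(u, v) \<in> rtrancl_on (verts G) (adj (arcs G)) \<longleftrightarrow> (u, v) \<in> (adj (arcs G))\<^sup>*"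
  proof
    assume "(u, v) \<in> (adj (arcs G))\<^sup>*"
    then show "(u, v) \<in> rtrancl_on (verts G) (adj (arcs G))"
    proof (induction rule: rtrancl_induct)
      case base
      then show ?case using assms by simp
    next
      case (step y z)
      then have "z \<in> verts G" unfolding adj_def by auto
      then show ?case using step rtrancl_on_into_rtrancl_on by metis
    qed
  qed (rule rtrancl_on_rtranclI)
  moreover have "arcs_ends (with_proj (mk_symmetric G)) = adj (arcs G)"
    by (simp add: parcs_mk_symmetric adj_def)
  ultimately show ?thesis unfolding reachable_def by simp
qed

lemma components_eq_sub_components: "components G = sub_components (arcs G)"
proof -
  have "wf_digraph (with_proj (mk_symmetric G))"
    by unfold_locales (auto simp: parcs_mk_symmetric)
  moreover have "pre_digraph.scc_of (with_proj (mk_symmetric G)) u = component (arcs G) u"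
    if u: "u \<in> verts G" for u
  proof -
    have "v \<in> verts G" if "v \<in> component (arcs G) u" for v
      using component_subset_verts[OF _ u] that by blast
    then show ?thesis
      unfolding pre_digraph.scc_of_def component_def
      using reachable_mk_symmetric_iff u adj_rtrancl_sym by blast
  qed
  ultimately show ?thesis
    unfolding components_def sub_components_def by (simp add: wf_digraph.sccs_verts_conv_scc_of)
qed

lemma rho_eq_rho_sub: "rho G = rho_sub (arcs G)"
  unfolding rho_def rho_sub_def components_eq_sub_components
  by (rule sum.cong) (auto simp: h1_comp_def excess_def)

end

theorem mainTheorem10:
  fixes G :: "('v, 'e::linorder) pre_digraph"
  assumes "fin_digraph G"
  shows "rho G = int (h1_twist_struct TYPE('k::field) G)"
proof -
  interpret twisted_digraph G using assms by (simp add: twisted_digraph_def)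
  obtain B :: "('e \<Rightarrow> ('e,'k) ratfun) set" where B: "finite B" "cochains.independent B"
      "cochains.span B = d_kernel (arcs G)" "int (card B) = rho_sub (arcs G)"
    using d_kernel_basis[of "arcs G"] by blast
  have "h1_twist_struct TYPE('k) G = card B"
    unfolding h1_twist_struct_def twisted_kernel_eq_d_kernel B(3)[symmetric]
    using B(2) by (simp add: cochains.dim_eq_card_independent)
  then show ?thesis using B(4) rho_eq_rho_sub by simp
qed

end
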